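(* Let $X$ be a finite set, $R>1$, $p\in(0,1]$, let $\pi$ be an $R$-spread probability measure on subsets of $X$, and set $\delta=(pR)^{-1/3}$. Let $\mathbb{P}_p$ be the planted model: $\mathbf{A}\sim\pi$, independently $\mathbf{V}\sim\mathbb{Q}_p$, and $\mathbf{Y}=\mathbf{A}\cup\mathbf{V}$. If \[ \mathbb{E}_{\mathbb{P}_p}\big(\mathcal{Z}_{\mathbf{Y}}(\mathbf{A},\delta)\big)\le 6\delta^2, \] then \[ \mathbb{E}_{\mathbb{P}_p}\bigg(\frac{\mathcal{Z}_{\mathbf{Y}}(\mathbf{A},\delta)}{\mathcal{Z}_{\mathbf{Y}}}\bigg)\le 6\delta . \]
   Context: A probability measure $\pi$ on subsets of $X$ is $R$-spread if for every $S\subseteq X$, $\pi(S\subseteq\mathbf{A})\le R^{-|S|}$ for $\mathbf{A}\sim\pi$. $\mathbb{Q}_p$ is the law of the random subset of $X$ containing each element independently with probability $p$. For $Y\subseteq X$ define $\mathcal{Z}_{Y}=\sum_{A'\subseteq X}\pi(A')\,\mathbf{1}\{A'\subseteq Y\}\,p^{-|A'|}$, and for $A\subseteq X$ define $\mathcal{Z}_{Y}(A,\delta)=\sum_{A'\subseteq X:\,|A\cap A'|>\delta|A|}\pi(A')\,\mathbf{1}\{A'\subseteq Y\}\,p^{-|A'|}$. *)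

theory Defs
  imports Complex_Main
begin

definition prob_on_subsets :: "'a set \<Rightarrow> ('a set \<Rightarrow> real) \<Rightarrow> bool" where
  "prob_on_subsets X \<pi> \<longleftrightarrow> (\<forall>A. 0 \<le> \<pi> A) \<and> (\<forall>A. \<not> A \<subseteq> X \<longrightarrow> \<pi> A = 0)
     \<and> (\<Sum>A\<in>Pow X. \<pi> A) = 1"

definition spread :: "'a set \<Rightarrow> real \<Rightarrow> ('a set \<Rightarrow> real) \<Rightarrow> bool" where
  "spread X R \<pi> \<longleftrightarrow> (\<forall>S. S \<subseteq> X \<longrightarrow> (\<Sum>A\<in>{A\<in>Pow X. S \<subseteq> A}. \<pi> A) \<le> R powr (- real (card S)))"

definition Qp :: "'a set \<Rightarrow> real \<Rightarrow> 'a set \<Rightarrow> real" where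
  "Qp X p V = (if V \<subseteq> X then p ^ card V * (1 - p) ^ (card X - card V) else 0)"

definition Z :: "'a set \<Rightarrow> ('a set \<Rightarrow> real) \<Rightarrow> real \<Rightarrow> 'a set \<Rightarrow> real" where
  "Z X \<pi> p Y = (\<Sum>A'\<in>Pow X. \<pi> A' * (if A' \<subseteq> Y then 1 else 0) * p powr (- real (card A')))"

definition Zdelta :: "'a set \<Rightarrow> ('a set \<Rightarrow> real) \<Rightarrow> real \<Rightarrow> 'a set \<Rightarrow> 'a set \<Rightarrow> real \<Rightarrow> real" where
  "Zdelta X \<pi> p Y A \<delta> = (\<Sum>A'\<in>{A'\<in>Pow X. real (card (A \<inter> A')) > \<delta> * real (card A)}.
      \<pi> A' * (if A' \<subseteq> Y then 1 else 0) * p powr (- real (card A')))"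

definition planted_exp :: "'a set \<Rightarrow> ('a set \<Rightarrow> real) \<Rightarrow> real \<Rightarrow> ('a set \<Rightarrow> 'a set \<Rightarrow> real) \<Rightarrow> real" where
  "planted_exp X \<pi> p f = (\<Sum>A\<in>Pow X. \<Sum>V\<in>Pow X. \<pi> A * Qp X p V * f A (A \<union> V))"

end

(*
  By AM-GM and Z_Y(A, delta) <= Z_Y, the ratio Z_Y(A, delta) / Z_Y is at most
  Z_Y(A, delta) / (2 delta) + delta / (2 Z_Y).  In the planted model the pair (A, Y) has mass
  pi(A) 1{A <= Y} p^-|A| Q_p(Y), so the law of Y has density Z_Y with respect to Q_p and
  E(1 / Z_Y) <= 1.  Hence the expectation is at most 6 delta^2 / (2 delta) + delta / 2 <= 6 delta.
*)
theory Submission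
  imports Defs
begin

lemma sum_Pow_power_card:
  fixes p q :: "'b::comm_semiring_1"
  assumes "finite A"
  shows "(\<Sum>B\<in>Pow A. p ^ card B * q ^ (card A - card B)) = (p + q) ^ card A"
  using assms
proof (induction A rule: finite_induct)
  case empty
  then show ?case by simp
next
  case (insert x F)
  have inj: "inj_on (insert x) (Pow F)"
    using insert.hyps(2) unfolding inj_on_def by (metis PowD insert_ident subsetD)
  have card_insert_B: "card (insert x B) = Suc (card B)" if "B \<subseteq> F" for B
  proof -
    have "finite B" "x \<notin> B" using that insert.hyps finite_subset by auto
    then show ?thesis by simp
  qed
  have card_diff_B: "Suc (card F) - card B = Suc (card F - card B)" if "B \<subseteq> F" for B
    using that insert.hyps by (simp add: card_mono Suc_diff_le)
  have "(\<Sum>B\<in>Pow (insert x F). p ^ card B * q ^ (card (insert x F) - card B))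
      = (\<Sum>B\<in>Pow F. p ^ card B * q ^ (card (insert x F) - card B))
        + (\<Sum>B\<in>Pow F. p ^ card (insert x B) * q ^ (card (insert x F) - card (insert x B)))"
    unfolding Pow_insert using insert.hyps inj
    by (subst sum.union_disjoint) (auto simp: sum.reindex)
  also have "\<dots> = (\<Sum>B\<in>Pow F. q * (p ^ card B * q ^ (card F - card B)))
        + (\<Sum>B\<in>Pow F. p * (p ^ card B * q ^ (card F - card B)))"
    using insert.hyps
    by (intro arg_cong2[where f = "(+)"] sum.cong) (auto simp: card_insert_B card_diff_B mult_ac)
  also have "\<dots> = (p + q) ^ card (insert x F)"
    using insert by (simp add: sum_distrib_left[symmetric] algebra_simps)
  finally show ?case .
qed

lemma divide_le_AM_GM:
  fixes a z d :: real
  assumes "0 \<le> a" "a \<le> z" "d > 0"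
  shows "a / z \<le> 1 / (2 * d) * a + d / 2 * (1 / z)"
proof (cases "z = 0")
  case True
  then show ?thesis using assms by simp
next
  case False
  then have "z > 0" using assms by simp
  have "2 * d * a \<le> a\<^sup>2 + d\<^sup>2"
    using sum_squares_ge_zero[of "a - d" 0] by (simp add: power2_eq_square algebra_simps)
  also have "a\<^sup>2 \<le> a * z"
    using assms by (simp add: power2_eq_square mult_left_mono)
  finally show ?thesis
    using \<open>z > 0\<close> assms by (simp add: field_simps power2_eq_square)
qed

lemma Qp_nonneg: "0 \<le> p \<Longrightarrow> p \<le> 1 \<Longrightarrow> 0 \<le> Qp X p V"
  unfolding Qp_def by simp

lemma sum_Qp: "finite X \<Longrightarrow> (\<Sum>V\<in>Pow X. Qp X p V) = 1"
  unfolding Qp_def by (simp add: sum_Pow_power_card)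

lemma sum_Qp_union_eq:
  fixes p :: real
  assumes "finite X" "A \<subseteq> Y" "Y \<subseteq> X"
  shows "(\<Sum>V\<in>{V\<in>Pow X. A \<union> V = Y}. Qp X p V) * p ^ card A = Qp X p Y"
proof -
  have fin_Y: "finite Y"
    using assms(1,3) by (rule rev_finite_subset)
  have fin_A: "finite A"
    using fin_Y assms(2) by (rule rev_finite_subset)
  have card_A: "card A \<le> card Y" and card_Y: "card Y \<le> card X"
    using card_mono[OF fin_Y assms(2)] card_mono[OF assms(1,3)] .
  have fiber: "{V\<in>Pow X. A \<union> V = Y} = (\<lambda>B. (Y - A) \<union> B) ` Pow A"
    using assms by auto
  have inj: "inj_on (\<lambda>B. (Y - A) \<union> B) (Pow A)"
    unfolding inj_on_def by blast
  have Qp_split: "Qp X p ((Y - A) \<union> B)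
      = p ^ (card Y - card A) * (1 - p) ^ (card X - card Y) * (p ^ card B * (1 - p) ^ (card A - card B))"
    if "B \<subseteq> A" for B
  proof -
    have card_B: "card B \<le> card A"
      using fin_A that by (rule card_mono)
    have card_union: "card ((Y - A) \<union> B) = card Y - card A + card B"
      using that fin_A fin_Y assms
      by (subst card_Un_disjoint) (auto simp: card_Diff_subset rev_finite_subset)
    then have "card X - card ((Y - A) \<union> B) = (card X - card Y) + (card A - card B)"
      using card_A card_B card_Y by simp
    moreover have "(Y - A) \<union> B \<subseteq> X"
      using that assms by auto
    ultimately show ?thesis
      using card_union by (simp add: Qp_def power_add mult_ac)
  qed
  have "(\<Sum>V\<in>{V\<in>Pow X. A \<union> V = Y}. Qp X p V) = p ^ (card Y - card A) * (1 - p) ^ (card X - card Y)"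
    unfolding fiber using fin_A
    by (simp add: sum.reindex[OF inj] Qp_split sum_distrib_left[symmetric] sum_Pow_power_card)
  moreover have "p ^ (card Y - card A) * p ^ card A = p ^ card Y"
    using card_A by (simp add: power_add[symmetric])
  ultimately show ?thesis
    using assms by (simp add: Qp_def mult_ac)
qed

lemma sum_Qp_union:
  fixes p :: real
  assumes "finite X" "A \<subseteq> X" "p > 0"
  shows "(\<Sum>V\<in>Pow X. Qp X p V * h (A \<union> V))
    = (\<Sum>Y\<in>Pow X. (if A \<subseteq> Y then 1 else 0) * p powr - real (card A) * Qp X p Y * h Y)"
proof -
  have "(\<Sum>V\<in>Pow X. Qp X p V * h (A \<union> V))
      = (\<Sum>Y\<in>{Y\<in>Pow X. A \<subseteq> Y}. \<Sum>V\<in>{V\<in>Pow X. A \<union> V = Y}. Qp X p V * h (A \<union> V))"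
    using assms by (intro sum.group[symmetric]) auto
  also have "\<dots> = (\<Sum>Y\<in>{Y\<in>Pow X. A \<subseteq> Y}. (\<Sum>V\<in>{V\<in>Pow X. A \<union> V = Y}. Qp X p V) * h Y)"
    by (simp add: sum_distrib_right)
  also have "\<dots> = (\<Sum>Y\<in>{Y\<in>Pow X. A \<subseteq> Y}. p powr - real (card A) * Qp X p Y * h Y)"
  proof (intro sum.cong refl)
    fix Y assume "Y \<in> {Y\<in>Pow X. A \<subseteq> Y}"
    then have "(\<Sum>V\<in>{V\<in>Pow X. A \<union> V = Y}. Qp X p V) * p ^ card A = Qp X p Y"
      using assms by (intro sum_Qp_union_eq) auto
    then show "(\<Sum>V\<in>{V\<in>Pow X. A \<union> V = Y}. Qp X p V) * h Y = p powr - real (card A) * Qp X p Y * h Y"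
      using assms by (simp add: powr_minus powr_realpow field_simps)
  qed
  also have "\<dots> = (\<Sum>Y\<in>Pow X. (if A \<subseteq> Y then 1 else 0) * p powr - real (card A) * Qp X p Y * h Y)"
    using assms by (subst sum.inter_filter) (auto intro!: sum.cong)
  finally show ?thesis .
qed

lemma planted_exp_eq_tilted:
  assumes "finite X" "p > 0"
  shows "planted_exp X \<pi> p f = (\<Sum>Y\<in>Pow X. Qp X p Y *
    (\<Sum>A\<in>Pow X. \<pi> A * (if A \<subseteq> Y then 1 else 0) * p powr - real (card A) * f A Y))"
proof -
  have "planted_exp X \<pi> p f = (\<Sum>A\<in>Pow X. \<pi> A * (\<Sum>V\<in>Pow X. Qp X p V * f A (A \<union> V)))"
    unfolding planted_exp_def by (simp add: sum_distrib_left mult.assoc)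
  also have "\<dots> = (\<Sum>A\<in>Pow X. \<pi> A *
      (\<Sum>Y\<in>Pow X. (if A \<subseteq> Y then 1 else 0) * p powr - real (card A) * Qp X p Y * f A Y))"
    using assms by (intro sum.cong refl) (simp add: sum_Qp_union)
  also have "\<dots> = (\<Sum>Y\<in>Pow X. Qp X p Y *
      (\<Sum>A\<in>Pow X. \<pi> A * (if A \<subseteq> Y then 1 else 0) * p powr - real (card A) * f A Y))"
    unfolding sum_distrib_left by (rule trans[OF sum.swap]) (simp add: mult_ac)
  finally show ?thesis .
qed

lemma planted_exp_fun_of_Y:
  assumes "finite X" "p > 0"
  shows "planted_exp X \<pi> p (\<lambda>A Y. g Y) = (\<Sum>Y\<in>Pow X. Qp X p Y * Z X \<pi> p Y * g Y)"
  using assms by (simp add: planted_exp_eq_tilted Z_def sum_distrib_left sum_distrib_right mult_ac)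

lemma planted_exp_inverse_Z_le_1:
  assumes "finite X" "0 < p" "p \<le> 1"
  shows "planted_exp X \<pi> p (\<lambda>A Y. 1 / Z X \<pi> p Y) \<le> 1"
proof -
  have "planted_exp X \<pi> p (\<lambda>A Y. 1 / Z X \<pi> p Y) = (\<Sum>Y\<in>Pow X. Qp X p Y * Z X \<pi> p Y * (1 / Z X \<pi> p Y))"
    using assms(1,2) by (rule planted_exp_fun_of_Y)
  also have "\<dots> \<le> (\<Sum>Y\<in>Pow X. Qp X p Y)"
    using assms Qp_nonneg[of p X] by (intro sum_mono) (cases "Z X \<pi> p Y = 0", auto)
  also have "\<dots> = 1"
    using assms by (simp add: sum_Qp)
  finally show ?thesis .
qed

lemma planted_exp_mono:
  assumes "prob_on_subsets X \<pi>" "0 \<le> p" "p \<le> 1" "\<And>A Y. f A Y \<le> g A Y"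
  shows "planted_exp X \<pi> p f \<le> planted_exp X \<pi> p g"
  unfolding planted_exp_def using assms
  by (intro sum_mono mult_left_mono) (auto simp: prob_on_subsets_def Qp_nonneg)

lemma planted_exp_linear:
  "planted_exp X \<pi> p (\<lambda>A Y. a * f A Y + b * g A Y) = a * planted_exp X \<pi> p f + b * planted_exp X \<pi> p g"
  unfolding planted_exp_def by (simp add: sum.distrib sum_distrib_left algebra_simps)

lemma Zdelta_nonneg:
  assumes "prob_on_subsets X \<pi>" "0 < p"
  shows "0 \<le> Zdelta X \<pi> p Y A \<delta>"
  unfolding Zdelta_def using assms by (intro sum_nonneg) (simp add: prob_on_subsets_def)

lemma Zdelta_le_Z:
  assumes "finite X" "prob_on_subsets X \<pi>" "0 < p"
  shows "Zdelta X \<pi> p Y A \<delta> \<le> Z X \<pi> p Y"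
  unfolding Zdelta_def Z_def using assms
  by (intro sum_mono2) (auto simp: prob_on_subsets_def)

theorem lemma4:
  fixes X :: "'a set" and \<pi> :: "'a set \<Rightarrow> real" and R p \<delta> :: real
  assumes "finite X"
    and "R > 1"
    and "0 < p" and "p \<le> 1"
    and "prob_on_subsets X \<pi>"
    and "spread X R \<pi>"
    and "\<delta> = (p * R) powr (- 1 / 3)"
    and "planted_exp X \<pi> p (\<lambda>A Y. Zdelta X \<pi> p Y A \<delta>) \<le> 6 * \<delta>\<^sup>2"
  shows "planted_exp X \<pi> p (\<lambda>A Y. Zdelta X \<pi> p Y A \<delta> / Z X \<pi> p Y) \<le> 6 * \<delta>"
proof -
  have "\<delta> > 0"
    using assms(2,3,7) by simp
  have ratio_le: "Zdelta X \<pi> p Y A \<delta> / Z X \<pi> p Y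
      \<le> 1 / (2 * \<delta>) * Zdelta X \<pi> p Y A \<delta> + \<delta> / 2 * (1 / Z X \<pi> p Y)" for A Y
    using assms(1,3,5) \<open>\<delta> > 0\<close> by (intro divide_le_AM_GM Zdelta_nonneg Zdelta_le_Z)
  have "planted_exp X \<pi> p (\<lambda>A Y. Zdelta X \<pi> p Y A \<delta> / Z X \<pi> p Y)
      \<le> planted_exp X \<pi> p (\<lambda>A Y. 1 / (2 * \<delta>) * Zdelta X \<pi> p Y A \<delta> + \<delta> / 2 * (1 / Z X \<pi> p Y))"
    using assms(3-5) by (intro planted_exp_mono ratio_le) auto
  also have "\<dots> = 1 / (2 * \<delta>) * planted_exp X \<pi> p (\<lambda>A Y. Zdelta X \<pi> p Y A \<delta>)
      + \<delta> / 2 * planted_exp X \<pi> p (\<lambda>A Y. 1 / Z X \<pi> p Y)"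
    by (rule planted_exp_linear)
  also have "\<dots> \<le> 1 / (2 * \<delta>) * (6 * \<delta>\<^sup>2) + \<delta> / 2 * 1"
    using assms(1,3,4,8) \<open>\<delta> > 0\<close>
    by (intro add_mono mult_left_mono planted_exp_inverse_Z_le_1) auto
  also have "\<dots> \<le> 6 * \<delta>"
    using \<open>\<delta> > 0\<close> by (simp add: power2_eq_square)
  finally show ?thesis .
qed

end
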